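(* Let $m,n\ge 1$, $r=\lceil\log_2 n\rceil$, and let $H\subseteq[n]$ be a set of holes. Consider the binary $\mathrm{PHP}^m_{|H|}$ in which each pigeon may go to a hole in $H$ only. Then any Sherali–Adams refutation of this formula involves a term that mentions at least $|H|$ pigeons.
   Context: Binary Pigeonhole Principle: pigeons $[m]$, holes $[n]$, an injective assignment of $r$-bit strings $\mathrm{bin}(a)=a_1\dots a_r$ to holes $a\in[n]$. Variables $P_{i,j}$ ($i\in[m]$, $j\in[r]$), $P_{i,j}$ being the $j$th bit of pigeon $i$'s hole; $X^1=X$, $X^0=\neg X$. Clauses: for every hole $a$ and pigeons $i\neq i'$, $\bigvee_{j=1}^r P_{i,j}^{1-a_j}\vee\bigvee_{j=1}^r P_{i',j}^{1-a_j}$. In the version where each pigeon may go to a hole in $H$ only, additionally for each pigeon $i$ and each $r$-bit string $c_1\dots c_r$ not equal to $\mathrm{bin}(a)$ for any $a\in H$, the clause $\bigvee_{j=1}^r P_{i,j}^{1-c_j}$. Sherali–Adams (SA): for every conjunction $D$ of literals (as a set; $\emptyset$ empty) there is a real variable (term) $Z_D$, $Z_\emptyset=1$. A lift by $D$ of a clause $l_1\vee\dots\vee l_t$ is $Z_{l_1\wedge D}+\dots+Z_{l_t\wedge D}\ge Z_D$; lifts of negation equalities are $Z_{v\wedge D}+Z_{\neg v\wedge D}=Z_D$; lifted bounds are $0\le Z_{l\wedge D}\le Z_D$. An SA refutation is a set of such lifted constraints (by conjunctions $D$ of any size) whose common real solution set is empty; it involves a term if that term occurs in one of its constraints. A term $Z_D$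 mentions pigeon $i$ if $D$ contains a literal of some variable $P_{i,j}$. *)

theory Defs
  imports Complex_Main
begin

text \<open>Variables: pairs (i,j) standing for P_{i,j} (pigeon i, bit j).
  Literals: (v, True) is v, (v, False) is the negation of v.
  Conjunctions D are sets of literals; a term is Z_D, an assignment of reals
  to all conjunctions is Z :: lit set \<Rightarrow> real.\<close>

type_synonym var = "nat \<times> nat"
type_synonym lit = "var \<times> bool"

text \<open>X^e for a bit e (True = 1): X^1 = X, X^0 = not X.\<close>
definition pw :: "var \<Rightarrow> bool \<Rightarrow> lit" where
  "pw v e = (v, e)"

definition valid_var :: "nat \<Rightarrow> nat \<Rightarrow> var \<Rightarrow> bool" where
  "valid_var m r v \<longleftrightarrow> fst v \<in> {1..m} \<and> snd v \<in> {1..r}"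

definition valid_conj :: "nat \<Rightarrow> nat \<Rightarrow> lit set \<Rightarrow> bool" where
  "valid_conj m r D \<longleftrightarrow> (\<forall>l\<in>D. valid_var m r (fst l))"

text \<open>Clause  OR_j P_{i,j}^{1-c_j}  for an r-bit string c (a list, c!(j-1) = c_j).\<close>
definition not_in_clause :: "nat \<Rightarrow> nat \<Rightarrow> bool list \<Rightarrow> lit list" where
  "not_in_clause r i c = map (\<lambda>j. pw (i, j) (\<not> c ! (j - 1))) [1..<r+1]"

text \<open>Binary PHP with pigeons [m], holes [n], bit length r, hole encoding bin,
  where pigeons may go only to holes in H.\<close>
definition bphp_clauses ::
  "nat \<Rightarrow> nat \<Rightarrow> nat \<Rightarrow> (nat \<Rightarrow> bool list) \<Rightarrow> nat set \<Rightarrow> lit list set" where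
  "bphp_clauses m n r bin H =
     {not_in_clause r i (bin a) @ not_in_clause r i' (bin a) | a i i'.
        a \<in> {1..n} \<and> i \<in> {1..m} \<and> i' \<in> {1..m} \<and> i \<noteq> i'}
   \<union> {not_in_clause r i c | i c.
        i \<in> {1..m} \<and> length c = r \<and> (\<forall>a\<in>H. c \<noteq> bin a)}"

datatype constr =
    ClauseLift "lit list" "lit set"
  | NegLift var "lit set"
  | BoundLift lit "lit set"

fun sat_constr :: "(lit set \<Rightarrow> real) \<Rightarrow> constr \<Rightarrow> bool" where
  "sat_constr Z (ClauseLift C D) \<longleftrightarrow> (\<Sum>l\<leftarrow>C. Z (insert l D)) \<ge> Z D"
| "sat_constr Z (NegLift v D) \<longleftrightarrow> Z (insert (v, True) D) + Z (insert (v, False) D) = Z D"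
| "sat_constr Z (BoundLift l D) \<longleftrightarrow> 0 \<le> Z (insert l D) \<and> Z (insert l D) \<le> Z D"

fun constr_terms :: "constr \<Rightarrow> lit set set" where
  "constr_terms (ClauseLift C D) = insert D ((\<lambda>l. insert l D) ` set C)"
| "constr_terms (NegLift v D) = {D, insert (v, True) D, insert (v, False) D}"
| "constr_terms (BoundLift l D) = {D, insert l D}"

fun admissible :: "nat \<Rightarrow> nat \<Rightarrow> lit list set \<Rightarrow> constr \<Rightarrow> bool" where
  "admissible m r F (ClauseLift C D) \<longleftrightarrow> C \<in> F \<and> valid_conj m r D"
| "admissible m r F (NegLift v D) \<longleftrightarrow> valid_var m r v \<and> valid_conj m r D"
| "admissible m r F (BoundLift l D) \<longleftrightarrow> valid_var m r (fst l) \<and> valid_conj m r D"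

definition SA_refutation :: "nat \<Rightarrow> nat \<Rightarrow> lit list set \<Rightarrow> constr set \<Rightarrow> bool" where
  "SA_refutation m r F S \<longleftrightarrow>
     (\<forall>c\<in>S. admissible m r F c) \<and>
     \<not> (\<exists>Z. Z {} = 1 \<and> (\<forall>c\<in>S. sat_constr Z c))"

definition involves :: "constr set \<Rightarrow> lit set \<Rightarrow> bool" where
  "involves S D \<longleftrightarrow> (\<exists>c\<in>S. D \<in> constr_terms c)"

definition mentioned_pigeons :: "lit set \<Rightarrow> nat set" where
  "mentioned_pigeons D = {i. \<exists>j b. ((i, j), b) \<in> D}"

end

theory Submission
  imports Defs "HOL-Library.FuncSet"
begin

text \<open>Send the pigeons mentioned by a term to the holes of \<open>H\<close> by a uniformly random
  injection and let \<open>Z\<^sub>D\<close> be the probability that the conjunction \<open>D\<close> then holds. The restriction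
  of a uniform injection \<open>V \<rightarrow> H\<close> to \<open>U \<subseteq> V\<close> is again uniform, so this probability does not
  change when further pigeons are sent along, as long as at most \<open>|H|\<close> pigeons are involved.
  Each lifted constraint mentions at most two pigeons beyond those of its term \<open>Z\<^sub>D\<close>, so if every
  term mentions fewer than \<open>|H|\<close> pigeons, all terms of a constraint can be evaluated under one
  random injection into \<open>H\<close>. Such an injection satisfies every clause of the formula, so taking
  expectations, \<open>Z\<close> satisfies every constraint of the refutation, a contradiction.\<close>

definition injections :: "nat set \<Rightarrow> nat set \<Rightarrow> (nat \<Rightarrow> nat) set" where
  "injections U H = {g \<in> U \<rightarrow>\<^sub>E H. inj_on g U}"

definition satisfies :: "(nat \<Rightarrow> bool list) \<Rightarrow> (nat \<Rightarrow> nat) \<Rightarrow> lit set \<Rightarrow> bool" where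
  "satisfies bin g D \<longleftrightarrow> (\<forall>((i, j), b) \<in> D. bin (g i) ! (j - 1) = b)"

definition sat_prob :: "(nat \<Rightarrow> bool list) \<Rightarrow> nat set \<Rightarrow> nat set \<Rightarrow> lit set \<Rightarrow> real" where
  "sat_prob bin H U D =
     (\<Sum>g\<in>injections U H. of_bool (satisfies bin g D)) / card (injections U H)"

text \<open>If \<open>D\<close> mentions more than \<open>|H|\<close> pigeons there are no injections, and the value is \<open>0 / 0 = 0\<close>.\<close>

definition injection_solution :: "(nat \<Rightarrow> bool list) \<Rightarrow> nat set \<Rightarrow> lit set \<Rightarrow> real" where
  "injection_solution bin H D = sat_prob bin H (mentioned_pigeons D) D"

subsection \<open>Restricting random injections\<close>

lemma finite_injections: "finite U \<Longrightarrow> finite H \<Longrightarrow> finite (injections U H)"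
  unfolding injections_def by (rule finite_subset[of _ "U \<rightarrow>\<^sub>E H"]) (auto intro: finite_PiE)

lemma restrict_in_injections:
  "g \<in> injections (insert i U) H \<Longrightarrow> restrict g U \<in> injections U H"
  unfolding injections_def by (auto intro: inj_on_subset)

lemma injections_fiber_eq:
  assumes "i \<notin> U" and f: "f \<in> injections U H"
  shows "{g \<in> injections (insert i U) H. restrict g U = f} = (\<lambda>h. f(i := h)) ` (H - f ` U)"
proof (intro equalityI subsetI)
  fix g assume "g \<in> {g \<in> injections (insert i U) H. restrict g U = f}"
  then have g: "g \<in> insert i U \<rightarrow>\<^sub>E H" "inj_on g (insert i U)" "restrict g U = f"
    unfolding injections_def by auto
  have "g = f(i := g i)"
  proof
    fix x show "g x = (f(i := g i)) x"
      using g(1) fun_cong[OF g(3), of x] by (cases "x \<in> insert i U") auto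
  qed
  moreover have "g i \<in> H - f ` U"
    using g \<open>i \<notin> U\<close> by (auto simp: inj_on_image_mem_iff)
  ultimately show "g \<in> (\<lambda>h. f(i := h)) ` (H - f ` U)" by blast
next
  fix g assume "g \<in> (\<lambda>h. f(i := h)) ` (H - f ` U)"
  then obtain h where h: "h \<in> H" "h \<notin> f ` U" and g: "g = f(i := h)" by blast
  have "restrict g U = f"
    using f \<open>i \<notin> U\<close> unfolding g injections_def by (auto simp: PiE_iff extensional_def)
  then show "g \<in> {g \<in> injections (insert i U) H. restrict g U = f}"
    using f h \<open>i \<notin> U\<close> unfolding g injections_def by (auto simp: PiE_iff extensional_def inj_on_def)
qed

lemma card_injections_fiber:
  assumes "finite H" "i \<notin> U" "f \<in> injections U H"
  shows "card {g \<in> injections (insert i U) H. restrict g U = f} = card H - card U"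
proof -
  have "f ` U \<subseteq> H" "inj_on f U"
    using assms(3) unfolding injections_def by auto
  then have "card (H - f ` U) = card H - card U"
    using assms(1) by (simp add: card_Diff_subset card_image finite_subset)
  moreover have "inj_on (\<lambda>h. f(i := h)) (H - f ` U)"
    by (auto simp: inj_on_def dest: fun_cong[where x = i])
  ultimately show ?thesis
    using injections_fiber_eq[OF assms(2,3)] by (simp add: card_image)
qed

lemma sum_injections_insert:
  fixes \<phi> :: "(nat \<Rightarrow> nat) \<Rightarrow> 'a::comm_semiring_1"
  assumes "finite U" "finite H" "i \<notin> U"
  shows "(\<Sum>g\<in>injections (insert i U) H. \<phi> (restrict g U))
           = of_nat (card H - card U) * (\<Sum>f\<in>injections U H. \<phi> f)"
proof -
  let ?fiber = "\<lambda>f. {g \<in> injections (insert i U) H. restrict g U = f}"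
  have "(\<Sum>g\<in>injections (insert i U) H. \<phi> (restrict g U))
          = (\<Sum>f\<in>injections U H. \<Sum>g\<in>?fiber f. \<phi> (restrict g U))"
    using assms by (intro sum.group[symmetric]) (auto simp: finite_injections restrict_in_injections)
  also have "\<dots> = (\<Sum>f\<in>injections U H. of_nat (card (?fiber f)) * \<phi> f)"
    by (intro sum.cong refl) simp
  also have "\<dots> = (\<Sum>f\<in>injections U H. of_nat (card H - card U) * \<phi> f)"
    using assms by (intro sum.cong refl) (simp add: card_injections_fiber)
  finally show ?thesis by (simp add: sum_distrib_left)
qed

subsection \<open>Probability that a conjunction holds\<close>

lemma mentioned_pigeons_eq: "mentioned_pigeons D = fst ` fst ` D"
  unfolding mentioned_pigeons_def by force

lemma satisfies_empty [simp]: "satisfies bin g {}"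
  unfolding satisfies_def by simp

lemma satisfies_insert [simp]:
  "satisfies bin g (insert ((i, j), b) D) \<longleftrightarrow> bin (g i) ! (j - 1) = b \<and> satisfies bin g D"
  unfolding satisfies_def by simp

text \<open>Not a simp rule: it would loop on \<open>{l} = insert l {}\<close>.\<close>

lemma satisfies_insert_iff:
  "satisfies bin g (insert l D) \<longleftrightarrow> satisfies bin g {l} \<and> satisfies bin g D"
  by (cases l) auto

lemma satisfies_restrict:
  "mentioned_pigeons D \<subseteq> U \<Longrightarrow> satisfies bin (restrict g U) D = satisfies bin g D"
  unfolding satisfies_def mentioned_pigeons_eq by (fastforce simp: image_subset_iff)

lemma sat_prob_insert:
  assumes "finite U" "finite H" "i \<notin> U" "card U < card H" "mentioned_pigeons D \<subseteq> U"
  shows "sat_prob bin H (insert i U) D = sat_prob bin H U D"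
proof -
  let ?k = "real (card H - card U)"
  have "(\<Sum>g\<in>injections (insert i U) H. of_bool (satisfies bin g D))
          = (\<Sum>g\<in>injections (insert i U) H. of_bool (satisfies bin (restrict g U) D) :: real)"
    using satisfies_restrict[OF assms(5)] by simp
  also have "\<dots> = ?k * (\<Sum>g\<in>injections U H. of_bool (satisfies bin g D))"
    using assms by (intro sum_injections_insert)
  finally have num: "(\<Sum>g\<in>injections (insert i U) H. of_bool (satisfies bin g D))
                       = ?k * (\<Sum>g\<in>injections U H. of_bool (satisfies bin g D))" .
  have "real (card (injections (insert i U) H)) = (\<Sum>g\<in>injections (insert i U) H. (\<lambda>_. 1) (restrict g U))"
    by simp
  also have "\<dots> = ?k * real (card (injections U H))"
    using assms by (subst sum_injections_insert) simp_all
  finally have den: "real (card (injections (insert i U) H)) = ?k * real (card (injections U H))" .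
  have "?k > 0" using assms(4) by simp
  then show ?thesis
    unfolding sat_prob_def num den by simp
qed

lemma sat_prob_superset:
  assumes "U \<subseteq> V" "finite V" "finite H" "card V \<le> card H" "mentioned_pigeons D \<subseteq> U"
  shows "sat_prob bin H V D = sat_prob bin H U D"
proof -
  have "finite U" using assms(1,2) by (rule finite_subset)
  have "sat_prob bin H (U \<union> F) D = sat_prob bin H U D"
    if "finite F" "card (U \<union> F) \<le> card H" for F
    using that
  proof (induction F rule: finite_induct)
    case empty
    then show ?case by simp
  next
    case (insert x F)
    show ?case
    proof (cases "x \<in> U \<union> F")
      case True
      then show ?thesis using insert by (simp add: insert_absorb)
    next
      case False
      then have "card (U \<union> F) < card H"
        using insert.prems insert.hyps(1) \<open>finite U\<close> by simp
      then have "sat_prob bin H (insert x (U \<union> F)) D = sat_prob bin H (U \<union> F) D"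
        using False insert.hyps(1) \<open>finite U\<close> assms(3,5) by (intro sat_prob_insert) auto
      then show ?thesis using insert.IH \<open>card (U \<union> F) < card H\<close> by simp
    qed
  qed
  from this[of "V - U"] show ?thesis
    using assms(1,2,4) by (simp add: Un_absorb1)
qed

lemma sat_prob_empty: "sat_prob bin H {} {} = 1"
  unfolding sat_prob_def injections_def by simp

lemma sat_prob_nonneg: "0 \<le> sat_prob bin H U D"
  unfolding sat_prob_def by (simp add: sum_nonneg)

lemma sat_prob_antimono: "D \<subseteq> E \<Longrightarrow> sat_prob bin H U E \<le> sat_prob bin H U D"
  unfolding sat_prob_def satisfies_def by (intro divide_right_mono sum_mono) auto

lemma sat_prob_split_var:
  "sat_prob bin H U (insert (v, True) D) + sat_prob bin H U (insert (v, False) D) = sat_prob bin H U D"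
  unfolding sat_prob_def add_divide_distrib[symmetric] sum.distrib[symmetric]
  by (cases v) (auto intro!: arg_cong[where f = "\<lambda>x. x / _"] sum.cong)

lemma sum_list_sum_divide:
  fixes f :: "'a \<Rightarrow> 'b \<Rightarrow> 'c::field"
  shows "(\<Sum>l\<leftarrow>C. (\<Sum>g\<in>A. f g l) / N) = (\<Sum>g\<in>A. \<Sum>l\<leftarrow>C. f g l) / N"
  by (induction C) (simp_all add: sum.distrib add_divide_distrib)

lemma sat_prob_clause:
  assumes "\<forall>g\<in>injections U H. \<exists>l\<in>set C. satisfies bin g {l}"
  shows "sat_prob bin H U D \<le> (\<Sum>l\<leftarrow>C. sat_prob bin H U (insert l D))"
proof -
  have pointwise: "of_bool (satisfies bin g D) \<le> (\<Sum>l\<leftarrow>C. of_bool (satisfies bin g (insert l D)) :: real)"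
    if g: "g \<in> injections U H" for g
  proof (cases "satisfies bin g D")
    case True
    obtain l where "l \<in> set C" "satisfies bin g {l}"
      using assms g by blast
    with True have "satisfies bin g (insert l D)"
      using satisfies_insert_iff by blast
    with True have eq: "of_bool (satisfies bin g D) = (of_bool (satisfies bin g (insert l D)) :: real)"
      by simp
    have "of_bool (satisfies bin g (insert l D)) \<in> set (map (\<lambda>l. of_bool (satisfies bin g (insert l D))) C)"
      unfolding set_map using \<open>l \<in> set C\<close> by (rule imageI)
    then have "of_bool (satisfies bin g (insert l D)) \<le> (\<Sum>l\<leftarrow>C. of_bool (satisfies bin g (insert l D)) :: real)"
      by (rule member_le_sum_list) auto
    then show ?thesis unfolding eq .
  next
    case False
    have "0 \<le> (\<Sum>l\<leftarrow>C. of_bool (satisfies bin g (insert l D)) :: real)"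
      by (rule sum_list_nonneg) auto
    with False show ?thesis by simp
  qed
  have "sat_prob bin H U D
          \<le> (\<Sum>g\<in>injections U H. \<Sum>l\<leftarrow>C. of_bool (satisfies bin g (insert l D))) / card (injections U H)"
    unfolding sat_prob_def by (intro divide_right_mono sum_mono pointwise) simp_all
  also have "\<dots> = (\<Sum>l\<leftarrow>C. sat_prob bin H U (insert l D))"
    unfolding sat_prob_def by (rule sum_list_sum_divide[symmetric])
  finally show ?thesis .
qed

subsection \<open>Random injections satisfy the clauses\<close>

lemma set_not_in_clause: "set (not_in_clause r i c) = (\<lambda>j. ((i, j), \<not> c ! (j - 1))) ` {1..r}"
  unfolding not_in_clause_def pw_def by auto

lemma mentioned_pigeons_not_in_clause:
  "r \<ge> 1 \<Longrightarrow> mentioned_pigeons (set (not_in_clause r i c)) = {i}"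
  unfolding set_not_in_clause mentioned_pigeons_eq by (simp add: image_image image_constant_conv)

lemma satisfies_not_in_clause_iff:
  assumes "length (bin (g i)) = r" "length c = r"
  shows "(\<exists>l\<in>set (not_in_clause r i c). satisfies bin g {l}) \<longleftrightarrow> bin (g i) \<noteq> c"
proof
  assume "\<exists>l\<in>set (not_in_clause r i c). satisfies bin g {l}"
  then show "bin (g i) \<noteq> c" unfolding set_not_in_clause by auto
next
  assume "bin (g i) \<noteq> c"
  then obtain k where "k < r" "bin (g i) ! k \<noteq> c ! k"
    using assms by (auto simp: list_eq_iff_nth_eq)
  then show "\<exists>l\<in>set (not_in_clause r i c). satisfies bin g {l}"
    unfolding set_not_in_clause by (intro bexI[of _ "((i, k + 1), \<not> c ! k)"]) auto
qed

lemma bphp_clause_pigeons: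
  assumes "C \<in> bphp_clauses m n r bin H"
  shows "\<exists>p q. mentioned_pigeons (set C) \<subseteq> {p, q}"
  using assms unfolding bphp_clauses_def
proof (elim UnE CollectE exE conjE)
  fix a i i' assume "C = not_in_clause r i (bin a) @ not_in_clause r i' (bin a)"
  then have "mentioned_pigeons (set C) \<subseteq> {i, i'}"
    by (auto simp: mentioned_pigeons_eq set_not_in_clause)
  then show ?thesis by blast
next
  fix i c assume "C = not_in_clause r i c"
  then have "mentioned_pigeons (set C) \<subseteq> {i, i}"
    by (auto simp: mentioned_pigeons_eq set_not_in_clause)
  then show ?thesis by blast
qed

lemma bphp_clause_satisfied:
  assumes C: "C \<in> bphp_clauses m n r bin H" and "r \<ge> 1" and "H \<subseteq> {1..n}"
    and len: "\<forall>a\<in>{1..n}. length (bin a) = r" and inj: "inj_on bin {1..n}"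
    and g: "g \<in> injections U H" and U: "mentioned_pigeons (set C) \<subseteq> U"
  shows "\<exists>l\<in>set C. satisfies bin g {l}"
proof -
  have hole: "g i \<in> H" "length (bin (g i)) = r" if "i \<in> U" for i
    using g that len \<open>H \<subseteq> {1..n}\<close> unfolding injections_def by auto
  have mentioned: "i \<in> U" if "set (not_in_clause r i c) \<subseteq> set C" for i c
  proof -
    have "{i} \<subseteq> mentioned_pigeons (set C)"
      using that mentioned_pigeons_not_in_clause[OF \<open>r \<ge> 1\<close>, of i c]
      unfolding mentioned_pigeons_eq by (metis image_mono)
    then show ?thesis using U by blast
  qed
  show ?thesis
    using C unfolding bphp_clauses_def
  proof (elim UnE CollectE exE conjE)
    fix a i i' assume C: "C = not_in_clause r i (bin a) @ not_in_clause r i' (bin a)"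
      and a: "a \<in> {1..n}" and "i \<noteq> i'"
    have "i \<in> U" "i' \<in> U" using mentioned C by auto
    then have "g i \<noteq> g i'"
      using g \<open>i \<noteq> i'\<close> unfolding injections_def by (auto dest: inj_onD)
    moreover have "g i \<in> {1..n}" "g i' \<in> {1..n}"
      using hole \<open>i \<in> U\<close> \<open>i' \<in> U\<close> \<open>H \<subseteq> {1..n}\<close> by blast+
    ultimately have "bin (g i) \<noteq> bin a \<or> bin (g i') \<noteq> bin a"
      using inj a by (metis inj_onD)
    moreover have "length (bin a) = r" using len a by blast
    ultimately show ?thesis
      unfolding C using satisfies_not_in_clause_iff[of bin g i r "bin a"]
        satisfies_not_in_clause_iff[of bin g i' r "bin a"] hole \<open>i \<in> U\<close> \<open>i' \<in> U\<close> by auto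
  next
    fix i c assume C: "C = not_in_clause r i c" and "length c = r" and "\<forall>a\<in>H. c \<noteq> bin a"
    have "i \<in> U" using mentioned C by auto
    then show ?thesis
      using satisfies_not_in_clause_iff hole \<open>length c = r\<close> \<open>\<forall>a\<in>H. c \<noteq> bin a\<close> unfolding C
      by metis
  qed
qed

subsection \<open>The injection solution satisfies small constraints\<close>

lemma card_Un_le_of_insert_less:
  assumes "finite A" "X \<subseteq> {p, q}" "card A < s" "\<forall>x\<in>X. card (insert x A) < s"
  shows "card (A \<union> X) \<le> s"
proof (cases "X \<subseteq> A")
  case True
  then show ?thesis using assms(3) by (simp add: Un_absorb2)
next
  case False
  then obtain x where "x \<in> X" "x \<notin> A" by auto
  then have "card A + 2 \<le> s" using assms(1,4) by fastforce
  moreover have "card X \<le> 2"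
  proof -
    have "card X \<le> card {p, q}" using assms(2) by (intro card_mono) auto
    also have "\<dots> \<le> 2" by (cases "p = q") auto
    finally show ?thesis .
  qed
  ultimately show ?thesis using card_Un_le[of A X] by linarith
qed

lemma injection_solution_eq_sat_prob:
  assumes "mentioned_pigeons D \<subseteq> U" "finite U" "finite H" "card U \<le> card H"
  shows "injection_solution bin H D = sat_prob bin H U D"
  unfolding injection_solution_def using assms
  by (intro sat_prob_superset[symmetric]) (auto dest: finite_subset card_mono[rotated])

lemma finite_mentioned_pigeons: "valid_conj m r D \<Longrightarrow> finite (mentioned_pigeons D)"
  unfolding valid_conj_def valid_var_def mentioned_pigeons_eq
  by (rule finite_subset[of _ "{1..m}"]) auto

lemma sat_BoundLift_injection_solution:
  assumes "finite H" "finite (mentioned_pigeons D)"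
    and "card (mentioned_pigeons (insert l D)) \<le> card H"
  shows "sat_constr (injection_solution bin H) (BoundLift l D)"
proof -
  let ?U = "mentioned_pigeons (insert l D)"
  have "finite ?U" using assms(2) by (simp add: mentioned_pigeons_eq)
  then have "injection_solution bin H D = sat_prob bin H ?U D"
    using assms by (intro injection_solution_eq_sat_prob) (auto simp: mentioned_pigeons_eq)
  then show ?thesis
    using sat_prob_antimono[of D "insert l D" bin H ?U] sat_prob_nonneg
    unfolding injection_solution_def by auto
qed

lemma sat_NegLift_injection_solution:
  assumes "finite H" "finite (mentioned_pigeons D)"
    and "card (mentioned_pigeons (insert (v, True) D)) \<le> card H"
  shows "sat_constr (injection_solution bin H) (NegLift v D)"
proof -
  let ?U = "mentioned_pigeons (insert (v, True) D)"
  have "finite ?U" using assms(2) by (simp add: mentioned_pigeons_eq)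
  then have "injection_solution bin H E = sat_prob bin H ?U E"
    if "E \<in> {D, insert (v, True) D, insert (v, False) D}" for E
    using that assms by (intro injection_solution_eq_sat_prob) (auto simp: mentioned_pigeons_eq)
  then show ?thesis using sat_prob_split_var by simp
qed

lemma sat_ClauseLift_injection_solution:
  assumes C: "C \<in> bphp_clauses m n r bin H" and "r \<ge> 1" and "H \<subseteq> {1..n}"
    and "\<forall>a\<in>{1..n}. length (bin a) = r" and "inj_on bin {1..n}"
    and "finite (mentioned_pigeons D)" and "card (mentioned_pigeons D) < card H"
    and small: "\<forall>l\<in>set C. card (mentioned_pigeons (insert l D)) < card H"
  shows "sat_constr (injection_solution bin H) (ClauseLift C D)"
proof -
  let ?U = "mentioned_pigeons D \<union> mentioned_pigeons (set C)"
  have "finite H" using \<open>H \<subseteq> {1..n}\<close> by (rule finite_subset) simp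
  have "finite ?U" using assms(6) by (simp add: mentioned_pigeons_eq)
  obtain p q where "mentioned_pigeons (set C) \<subseteq> {p, q}"
    using bphp_clause_pigeons[OF C] by blast
  moreover have "\<forall>x\<in>mentioned_pigeons (set C). card (insert x (mentioned_pigeons D)) < card H"
    using small by (auto simp: mentioned_pigeons_eq)
  ultimately have "card ?U \<le> card H"
    using assms(6,7) by (intro card_Un_le_of_insert_less)
  then have Z: "injection_solution bin H E = sat_prob bin H ?U E" if "mentioned_pigeons E \<subseteq> ?U" for E
    using that \<open>finite ?U\<close> \<open>finite H\<close> by (intro injection_solution_eq_sat_prob)
  have "sat_prob bin H ?U D \<le> (\<Sum>l\<leftarrow>C. sat_prob bin H ?U (insert l D))"
    using bphp_clause_satisfied[OF C assms(2-5)] by (intro sat_prob_clause) blast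
  also have "\<dots> = (\<Sum>l\<leftarrow>C. injection_solution bin H (insert l D))"
  proof (intro arg_cong[where f = sum_list] map_cong refl)
    fix l assume "l \<in> set C"
    then have "mentioned_pigeons (insert l D) \<subseteq> ?U"
      by (auto simp: mentioned_pigeons_eq)
    then show "sat_prob bin H ?U (insert l D) = injection_solution bin H (insert l D)"
      by (rule Z[symmetric])
  qed
  finally show ?thesis using Z[of D] by simp
qed

lemma sat_constr_injection_solution:
  assumes "admissible m r (bphp_clauses m n r bin H) c" and "r \<ge> 1" and "H \<subseteq> {1..n}"
    and "\<forall>a\<in>{1..n}. length (bin a) = r" and "inj_on bin {1..n}"
    and small: "\<forall>T\<in>constr_terms c. card (mentioned_pigeons T) < card H"
  shows "sat_constr (injection_solution bin H) c"
proof -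
  have "finite H" using \<open>H \<subseteq> {1..n}\<close> by (rule finite_subset) simp
  show ?thesis
  proof (cases c)
    case (ClauseLift C D)
    have "C \<in> bphp_clauses m n r bin H" "finite (mentioned_pigeons D)"
      using assms(1) finite_mentioned_pigeons unfolding ClauseLift by auto
    moreover have "card (mentioned_pigeons D) < card H"
      and "\<forall>l\<in>set C. card (mentioned_pigeons (insert l D)) < card H"
      using small unfolding ClauseLift by simp_all
    ultimately show ?thesis
      unfolding ClauseLift using assms(2-5) by (intro sat_ClauseLift_injection_solution)
  next
    case (NegLift v D)
    have "finite (mentioned_pigeons D)"
      using assms(1) finite_mentioned_pigeons unfolding NegLift by auto
    moreover have "card (mentioned_pigeons (insert (v, True) D)) \<le> card H"
      using small unfolding NegLift by simp
    ultimately show ?thesis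
      unfolding NegLift using \<open>finite H\<close> by (intro sat_NegLift_injection_solution)
  next
    case (BoundLift l D)
    have "finite (mentioned_pigeons D)"
      using assms(1) finite_mentioned_pigeons unfolding BoundLift by auto
    moreover have "card (mentioned_pigeons (insert l D)) \<le> card H"
      using small unfolding BoundLift by simp
    ultimately show ?thesis
      unfolding BoundLift using \<open>finite H\<close> by (intro sat_BoundLift_injection_solution)
  qed
qed

theorem lemma2:
  fixes m n r :: nat and H :: "nat set" and bin :: "nat \<Rightarrow> bool list"
    and S :: "constr set"
  assumes "m \<ge> 1" and "n \<ge> 2"
    and "r = nat \<lceil>log 2 (real n)\<rceil>"
    and "H \<subseteq> {1..n}"
    and "\<forall>a\<in>{1..n}. length (bin a) = r" and "inj_on bin {1..n}"
    and "SA_refutation m r (bphp_clauses m n r bin H) S"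
  shows "\<exists>D. involves S D \<and> card (mentioned_pigeons D) \<ge> card H"
proof (rule ccontr)
  assume "\<not> ?thesis"
  then have small: "\<forall>T\<in>constr_terms c. card (mentioned_pigeons T) < card H" if "c \<in> S" for c
    using that unfolding involves_def by force
  have "0 < log 2 (real n)" using \<open>n \<ge> 2\<close> by simp
  then have "r \<ge> 1" using \<open>r = nat \<lceil>log 2 (real n)\<rceil>\<close> by (simp add: one_le_ceiling le_nat_iff)
  then have "\<forall>c\<in>S. sat_constr (injection_solution bin H) c"
    using assms(4-7) small sat_constr_injection_solution unfolding SA_refutation_def by blast
  moreover have "injection_solution bin H {} = 1"
    unfolding injection_solution_def mentioned_pigeons_eq by (simp add: sat_prob_empty)
  ultimately show False
    using assms(7) unfolding SA_refutation_def by blast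
qed

end
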